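(* Let $(\mathcal{T},q)$ be an interaction-free OMQ with $\mathcal{T}$ a DL-Lite$_\mathcal{R}$ TBox and $q=q_1\wedge q_2$ a Boolean CQ with $\mathrm{vars}(q_1)\cap\mathrm{vars}(q_2)=\emptyset$. Then for every ABox $\mathcal{A}$, $\#\mathrm{MS}_{(\mathcal{T},q)}(\mathcal{A})=\#\mathrm{MS}_{(\mathcal{T},q_1)}(\mathcal{A})\cdot\#\mathrm{MS}_{(\mathcal{T},q_2)}(\mathcal{A})$.
   Context: DL-Lite$_\mathcal{R}$ TBoxes contain inclusions $B\sqsubseteq C$, $R\sqsubseteq S$ with $B::=A\mid\exists R$, $C::=B\mid\neg B$, $R$ a role ($r$ or $r^-$), $S::=R\mid\neg R$. An ABox $\mathcal{A}$ is a finite set of assertions $A(c)$, $r(b,c)$; $\mathrm{const}(\mathcal{A})$ is its set of individuals. For an OMQ $Q=(\mathcal{T},q)$, a minimal support of $Q$ in $\mathcal{A}$ is an inclusion-minimal $S\subseteq\mathcal{A}$ such that $q$ holds in every model of $(S,\mathcal{T})$; $\#\mathrm{MS}_Q(\mathcal{A})$ is their number. For a consistent KB $(\mathcal{A},\mathcal{T})$, the canonical model $\mathcal{C}_{\mathcal{A},\mathcal{T}}$ has domain all words $aR_1\cdots R_n$ ($n\ge0$, $a\in\mathrm{const}(\mathcal{A})$, $R_i$ roles) such that if $n\ge1$ then $(\mathcal{A},\mathcal{T})\models\exists R_1(a)$ and there is no $b\in\mathrm{const}(\mathcal{A})$ with $(\mathcal{A},\mathcal{T})\models R_1(a,b)$,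 and for $1\le i<n$, $\mathcal{T}\models\exists R_i^-\sqsubseteq\exists R_{i+1}$ and $R_i^-\neq R_{i+1}$; it interprets $a$ as $a$, $A$ as the individuals $a$ with $(\mathcal{A},\mathcal{T})\models A(a)$ plus words $aR_1\cdots R_n$ ($n\ge1$) with $\mathcal{T}\models\exists R_n^-\sqsubseteq A$, and $r$ as the pairs $(a,b)$ with $r(a,b)\in\mathcal{A}$, plus $(w,wR')$ with $\mathcal{T}\models R'\sqsubseteq r$, plus $(wR',w)$ with $\mathcal{T}\models R'\sqsubseteq r^-$. Elements outside $\mathrm{const}(\mathcal{A})$ are anonymous. Let $\circledast$ be a special symbol and $C^\circledast=C\cup\{\circledast\}$. For an atom $\alpha$ and $\mu:\mathrm{vars}(\alpha)\to\mathrm{const}(\mathcal{A})^\circledast$, write $(\mathcal{A},\mathcal{T})\models_\mu\alpha$ if there is a homomorphism $h:\alpha\to\mathcal{C}_{\mathcal{A},\mathcal{T}}$ with $h(x)=\mu(x)$ when $\mu(x)\in\mathrm{const}(\mathcal{A})$ and $h(x)$ anonymous when $\mu(x)=\circledast$. $(\mathcal{T},q)$ is interaction-free if for every assertion $f$, all atoms $\alpha,\beta$ of $q$ and all $\mu_\alpha:\mathrm{vars}(\alpha)\to\mathrm{const}(f)^\circledast$, $\mu_\beta:\mathrm{vars}(\beta)\to\mathrm{const}(f)^\circledast$, if $(\{f\},\mathcal{T})\models_{\mu_\alpha}\alpha$ and $(\{f\},\mathcal{T})\models_{\mu_\beta}\beta$ then $(\alpha,\mu_\alpha)=(\beta,\mu_\beta)$.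 *)

theory Defs
  imports Main
begin

datatype 'r role = RN 'r | Inv 'r

fun inv :: "'r role \<Rightarrow> 'r role" where
  "inv (RN r) = Inv r"
| "inv (Inv r) = RN r"

datatype ('c,'r) basic = AC 'c | Ex "'r role"

datatype ('c,'r) gconcept = PosC "('c,'r) basic" | NegC "('c,'r) basic"

datatype 'r grole = PosR "'r role" | NegR "'r role"

datatype ('c,'r) axiom = CIncl "('c,'r) basic" "('c,'r) gconcept" | RIncl "'r role" "'r grole"

datatype ('c,'r,'i) assertion = CAss 'c 'i | RAss 'r 'i 'i

datatype ('c,'r,'v) atom = CAtom 'c 'v | RAtom 'r 'v 'v

fun acon :: "('c,'r,'i) assertion \<Rightarrow> 'i set" where
  "acon (CAss _ a) = {a}"
| "acon (RAss _ a b) = {a, b}"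

definition constA :: "('c,'r,'i) assertion set \<Rightarrow> 'i set" where
  "constA A = (\<Union>f\<in>A. acon f)"

fun avars :: "('c,'r,'v) atom \<Rightarrow> 'v set" where
  "avars (CAtom _ x) = {x}"
| "avars (RAtom _ x y) = {x, y}"

definition qvars :: "('c,'r,'v) atom set \<Rightarrow> 'v set" where
  "qvars q = (\<Union>a\<in>q. avars a)"

text \<open>Interpretations; the domain is the whole type 'd.\<close>
record ('c,'r,'i,'d) interp =
  conI :: "'c \<Rightarrow> 'd set"
  roleI :: "'r \<Rightarrow> ('d \<times> 'd) set"
  indI :: "'i \<Rightarrow> 'd"

fun rolei :: "('c,'r,'i,'d) interp \<Rightarrow> 'r role \<Rightarrow> ('d \<times> 'd) set" where
  "rolei I (RN r) = roleI I r"
| "rolei I (Inv r) = (roleI I r)\<inverse>"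

fun basici :: "('c,'r,'i,'d) interp \<Rightarrow> ('c,'r) basic \<Rightarrow> 'd set" where
  "basici I (AC A) = conI I A"
| "basici I (Ex R) = Domain (rolei I R)"

fun gconi :: "('c,'r,'i,'d) interp \<Rightarrow> ('c,'r) gconcept \<Rightarrow> 'd set" where
  "gconi I (PosC B) = basici I B"
| "gconi I (NegC B) = - basici I B"

fun grolei :: "('c,'r,'i,'d) interp \<Rightarrow> 'r grole \<Rightarrow> ('d \<times> 'd) set" where
  "grolei I (PosR R) = rolei I R"
| "grolei I (NegR R) = - rolei I R"

fun sat_axiom :: "('c,'r,'i,'d) interp \<Rightarrow> ('c,'r) axiom \<Rightarrow> bool" where
  "sat_axiom I (CIncl B C) = (basici I B \<subseteq> gconi I C)"
| "sat_axiom I (RIncl R S) = (rolei I R \<subseteq> grolei I S)"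

fun sat_assertion :: "('c,'r,'i,'d) interp \<Rightarrow> ('c,'r,'i) assertion \<Rightarrow> bool" where
  "sat_assertion I (CAss A a) = (indI I a \<in> conI I A)"
| "sat_assertion I (RAss r a b) = ((indI I a, indI I b) \<in> roleI I r)"

fun sat_atom :: "('c,'r,'i,'d) interp \<Rightarrow> ('v \<Rightarrow> 'd) \<Rightarrow> ('c,'r,'v) atom \<Rightarrow> bool" where
  "sat_atom I h (CAtom A x) = (h x \<in> conI I A)"
| "sat_atom I h (RAtom r x y) = ((h x, h y) \<in> roleI I r)"

definition tmodel :: "('c,'r) axiom set \<Rightarrow> ('c,'r,'i,'d) interp \<Rightarrow> bool" where
  "tmodel T I = (\<forall>ax\<in>T. sat_axiom I ax)"

definition model :: "('c,'r) axiom set \<Rightarrow> ('c,'r,'i) assertion set \<Rightarrow> ('c,'r,'i,'d) interp \<Rightarrow> bool" where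
  "model T A I = (tmodel T I \<and> (\<forall>f\<in>A. sat_assertion I f))"

definition holds_q :: "('c,'r,'v) atom set \<Rightarrow> ('c,'r,'i,'d) interp \<Rightarrow> bool" where
  "holds_q q I = (\<exists>h. \<forall>\<alpha>\<in>q. sat_atom I h \<alpha>)"

text \<open>Models of KBs are taken with domain type 'i \<times> 'r role list (the type of the
  words of the canonical model), which contains a copy of every canonical model, so
  entailment over these models coincides with entailment over all models.\<close>
type_synonym ('c,'r,'i) kinterp = "('c,'r,'i,'i \<times> 'r role list) interp"

text \<open>Models of TBoxes alone: domain type 'r role list (large enough for the
  canonical model of a single basic concept).\<close>
type_synonym ('c,'r) tinterp = "('c,'r,unit,'r role list) interp"

definition entails :: "('c,'r) axiom set \<Rightarrow> ('c,'r,'i) assertion set \<Rightarrow> ('c,'r,'v) atom set \<Rightarrow> bool" where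
  "entails T A q = (\<forall>I :: ('c,'r,'i) kinterp. model T A I \<longrightarrow> holds_q q I)"

definition consistent :: "('c,'r) axiom set \<Rightarrow> ('c,'r,'i) assertion set \<Rightarrow> bool" where
  "consistent T A = (\<exists>I :: ('c,'r,'i) kinterp. model T A I)"

definition tent_ci :: "('c,'r) axiom set \<Rightarrow> ('c,'r) basic \<Rightarrow> ('c,'r) gconcept \<Rightarrow> bool" where
  "tent_ci T B C = (\<forall>I :: ('c,'r) tinterp. tmodel T I \<longrightarrow> basici I B \<subseteq> gconi I C)"

definition tent_ri :: "('c,'r) axiom set \<Rightarrow> 'r role \<Rightarrow> 'r grole \<Rightarrow> bool" where
  "tent_ri T R S = (\<forall>I :: ('c,'r) tinterp. tmodel T I \<longrightarrow> rolei I R \<subseteq> grolei I S)"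

definition kb_ent_con :: "('c,'r) axiom set \<Rightarrow> ('c,'r,'i) assertion set \<Rightarrow> 'c \<Rightarrow> 'i \<Rightarrow> bool" where
  "kb_ent_con T A Ac a = (\<forall>I :: ('c,'r,'i) kinterp. model T A I \<longrightarrow> indI I a \<in> conI I Ac)"

definition kb_ent_ex :: "('c,'r) axiom set \<Rightarrow> ('c,'r,'i) assertion set \<Rightarrow> 'r role \<Rightarrow> 'i \<Rightarrow> bool" where
  "kb_ent_ex T A R a = (\<forall>I :: ('c,'r,'i) kinterp. model T A I \<longrightarrow> indI I a \<in> basici I (Ex R))"

definition kb_ent_role :: "('c,'r) axiom set \<Rightarrow> ('c,'r,'i) assertion set \<Rightarrow> 'r role \<Rightarrow> 'i \<Rightarrow> 'i \<Rightarrow> bool" where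
  "kb_ent_role T A R a b = (\<forall>I :: ('c,'r,'i) kinterp. model T A I \<longrightarrow> (indI I a, indI I b) \<in> rolei I R)"

definition min_supports :: "('c,'r) axiom set \<Rightarrow> ('c,'r,'v) atom set \<Rightarrow> ('c,'r,'i) assertion set \<Rightarrow> ('c,'r,'i) assertion set set" where
  "min_supports T q A = {S. S \<subseteq> A \<and> entails T S q \<and> (\<forall>S'. S' \<subset> S \<longrightarrow> \<not> entails T S' q)}"

definition num_ms :: "('c,'r) axiom set \<Rightarrow> ('c,'r,'v) atom set \<Rightarrow> ('c,'r,'i) assertion set \<Rightarrow> nat" where
  "num_ms T q A = card (min_supports T q A)"

definition cm_dom :: "('c,'r) axiom set \<Rightarrow> ('c,'r,'i) assertion set \<Rightarrow> 'i \<times> 'r role list \<Rightarrow> bool" where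
  "cm_dom T A w = (fst w \<in> constA A \<and>
     (snd w \<noteq> [] \<longrightarrow>
        kb_ent_ex T A (hd (snd w)) (fst w) \<and>
        \<not> (\<exists>b\<in>constA A. kb_ent_role T A (hd (snd w)) (fst w) b) \<and>
        (\<forall>i. Suc i < length (snd w) \<longrightarrow>
           tent_ci T (Ex (inv (snd w ! i))) (PosC (Ex (snd w ! Suc i))) \<and>
           inv (snd w ! i) \<noteq> snd w ! Suc i)))"

definition cm_con :: "('c,'r) axiom set \<Rightarrow> ('c,'r,'i) assertion set \<Rightarrow> 'c \<Rightarrow> 'i \<times> 'r role list \<Rightarrow> bool" where
  "cm_con T A Ac w = (cm_dom T A w \<and>
     (if snd w = [] then kb_ent_con T A Ac (fst w)
      else tent_ci T (Ex (inv (last (snd w)))) (PosC (AC Ac))))"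

definition cm_role :: "('c,'r) axiom set \<Rightarrow> ('c,'r,'i) assertion set \<Rightarrow> 'r \<Rightarrow> 'i \<times> 'r role list \<Rightarrow> 'i \<times> 'r role list \<Rightarrow> bool" where
  "cm_role T A r w w' = (cm_dom T A w \<and> cm_dom T A w' \<and>
     ((snd w = [] \<and> snd w' = [] \<and> kb_ent_role T A (RN r) (fst w) (fst w')) \<or>
      (\<exists>R'. fst w' = fst w \<and> snd w' = snd w @ [R'] \<and> tent_ri T R' (PosR (RN r))) \<or>
      (\<exists>R'. fst w = fst w' \<and> snd w = snd w' @ [R'] \<and> tent_ri T R' (PosR (Inv r)))))"

fun cm_atom :: "('c,'r) axiom set \<Rightarrow> ('c,'r,'i) assertion set \<Rightarrow> ('v \<Rightarrow> 'i \<times> 'r role list) \<Rightarrow> ('c,'r,'v) atom \<Rightarrow> bool" where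
  "cm_atom T A h (CAtom Ac x) = cm_con T A Ac (h x)"
| "cm_atom T A h (RAtom r x y) = cm_role T A r (h x) (h y)"

text \<open>mu : vars(alpha) to const(f) plus the special symbol, encoded as 'v \<Rightarrow> 'i option
  with None for the special symbol; only its values on vars(alpha) matter.\<close>
definition valid_mu :: "('c,'r,'i) assertion \<Rightarrow> ('c,'r,'v) atom \<Rightarrow> ('v \<Rightarrow> 'i option) \<Rightarrow> bool" where
  "valid_mu f \<alpha> \<mu> = (\<forall>x\<in>avars \<alpha>. \<mu> x = None \<or> (\<exists>c\<in>acon f. \<mu> x = Some c))"

definition ent_mu :: "('c,'r) axiom set \<Rightarrow> ('c,'r,'i) assertion \<Rightarrow> ('c,'r,'v) atom \<Rightarrow> ('v \<Rightarrow> 'i option) \<Rightarrow> bool" where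
  "ent_mu T f \<alpha> \<mu> = (\<exists>h. (\<forall>x\<in>avars \<alpha>. (case \<mu> x of Some c \<Rightarrow> h x = (c, []) | None \<Rightarrow> snd (h x) \<noteq> []))
                         \<and> cm_atom T {f} h \<alpha>)"

definition interaction_free :: "('c,'r) axiom set \<Rightarrow> ('c,'r,'v) atom set \<Rightarrow> 'i itself \<Rightarrow> bool" where
  "interaction_free T q (_ :: 'i itself) =
     (\<forall>f :: ('c,'r,'i) assertion. consistent T {f} \<longrightarrow>
        (\<forall>\<alpha>\<in>q. \<forall>\<beta>\<in>q. \<forall>\<mu>\<alpha> \<mu>\<beta>.
           valid_mu f \<alpha> \<mu>\<alpha> \<and> valid_mu f \<beta> \<mu>\<beta> \<and> ent_mu T f \<alpha> \<mu>\<alpha> \<and> ent_mu T f \<beta> \<mu>\<beta> \<longrightarrow>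
           \<alpha> = \<beta> \<and> (\<forall>x\<in>avars \<alpha>. \<mu>\<alpha> x = \<mu>\<beta> x)))"

end

theory Submission
  imports Defs
begin

(* A set of assertions entails q1 \<and> q2 iff it entails both conjuncts, as these share no
   variables; so the minimal supports of the conjunction are the minimal unions S1 \<union> S2 of
   minimal supports of q1 and q2. The count is a product as soon as every minimal support of q1
   is disjoint from every minimal support of q2, for then each union is minimal and determines
   its two parts.
   Disjointness comes from interaction-freeness. In a minimal support every assertion f is
   needed, and matches in the canonical model are local: each atom matched in the canonical
   model of S is matched in that of a single assertion of S. Hence some atom is matched in the
   canonical model of {f} alone, and an f shared by supports of q1 and q2 would match an atom of
   q1 and an atom of q2 that interaction-freeness forces to coincide, although q1 and q2 share
   no variables. *)

lemma rolei_inv [simp]: "rolei I (inv R) = (rolei I R)\<inverse>"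
  by (cases R) auto

lemma inv_inv [simp]: "inv (inv R) = R"
  by (cases R) auto

definition pullback :: "('c,'r,'i,'d) interp \<Rightarrow> ('r role list \<Rightarrow> 'd) \<Rightarrow> ('c,'r) tinterp" where
  "pullback I g = \<lparr>conI = (\<lambda>A. g -` conI I A),
                   roleI = (\<lambda>r. {(x, y). (g x, g y) \<in> roleI I r}), indI = (\<lambda>_. [])\<rparr>"

definition successor_choice :: "('c,'r,'i,'d) interp \<Rightarrow> ('d \<Rightarrow> 'r role \<Rightarrow> 'd) \<Rightarrow> bool" where
  "successor_choice I w \<longleftrightarrow> (\<forall>x R. x \<in> Domain (rolei I R) \<longrightarrow> (x, w x R) \<in> rolei I R)"

lemma rolei_pullback: "rolei (pullback I g) R = {(x, y). (g x, g y) \<in> rolei I R}"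
  by (cases R) (auto simp: pullback_def)

lemma grolei_pullback: "grolei (pullback I g) S = {(x, y). (g x, g y) \<in> grolei I S}"
  by (cases S) (auto simp: rolei_pullback)

lemma basici_pullback:
  assumes "successor_choice I w"
  shows "basici (pullback I (foldl w d)) B = foldl w d -` basici I B"
proof (cases B)
  case (Ex R)
  have "x \<in> Domain (rolei (pullback I (foldl w d)) R)" if "foldl w d x \<in> Domain (rolei I R)" for x
  proof -
    have "(x, x @ [R]) \<in> rolei (pullback I (foldl w d)) R"
      using assms that by (simp add: successor_choice_def rolei_pullback)
    then show ?thesis by blast
  qed
  then show ?thesis
    using Ex by (auto simp: rolei_pullback)
qed (simp add: pullback_def)

lemma gconi_pullback:
  "successor_choice I w \<Longrightarrow> gconi (pullback I (foldl w d)) C = foldl w d -` gconi I C"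
  by (cases C) (auto simp: basici_pullback)

lemma tmodel_pullback:
  assumes "successor_choice I w" "tmodel T I"
  shows "tmodel T (pullback I (foldl w d))"
  unfolding tmodel_def
proof
  fix ax assume "ax \<in> T"
  with assms(2) have "sat_axiom I ax"
    by (simp add: tmodel_def)
  then show "sat_axiom (pullback I (foldl w d)) ax"
    by (cases ax) (auto simp: basici_pullback[OF assms(1)] gconi_pullback[OF assms(1)]
                              rolei_pullback grolei_pullback)
qed

definition some_succ :: "('c,'r,'i,'d) interp \<Rightarrow> 'd \<Rightarrow> 'r role \<Rightarrow> 'd" where
  "some_succ I x R = (SOME y. (x, y) \<in> rolei I R)"

lemma some_succ_in_rolei: "x \<in> Domain (rolei I R) \<Longrightarrow> (x, some_succ I x R) \<in> rolei I R"
  unfolding some_succ_def by (auto intro: someI)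

lemma successor_choice_some_succ: "successor_choice I (some_succ I)"
  by (simp add: successor_choice_def some_succ_in_rolei)

text \<open>Entailment over the models with domain \<open>'r role list\<close> is entailment over all models:
  any model unravels, from a given element, into one of these.\<close>

lemma tent_ciD:
  assumes "tent_ci T B C" "tmodel T I" "x \<in> basici I B"
  shows "x \<in> gconi I C"
proof -
  let ?J = "pullback I (foldl (some_succ I) x)"
  have "tmodel T ?J" "[] \<in> basici ?J B"
    using tmodel_pullback[OF successor_choice_some_succ assms(2)] assms(3)
    by (simp_all add: basici_pullback[OF successor_choice_some_succ])
  with assms(1) have "[] \<in> gconi ?J C"
    unfolding tent_ci_def by blast
  then show ?thesis
    by (simp add: gconi_pullback[OF successor_choice_some_succ])
qed

lemma tent_riD:
  assumes "tent_ri T R S" "tmodel T I" "(x, y) \<in> rolei I R"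
  shows "(x, y) \<in> grolei I S"
proof -
  define w where "w u R' = (if u = x \<and> R' = R then y else some_succ I u R')" for u R'
  have w: "successor_choice I w"
    using assms(3) by (auto simp: successor_choice_def w_def some_succ_in_rolei)
  let ?J = "pullback I (foldl w x)"
  have "tmodel T ?J" "([], [R]) \<in> rolei ?J R"
    using tmodel_pullback[OF w assms(2)] assms(3) by (simp_all add: rolei_pullback w_def)
  with assms(1) have "([], [R]) \<in> grolei ?J S"
    unfolding tent_ri_def by blast
  then show ?thesis
    by (simp add: grolei_pullback w_def)
qed

lemma tent_ci_refl: "tent_ci T B (PosC B)"
  by (simp add: tent_ci_def)

lemma tent_ci_trans: "tent_ci T B (PosC B') \<Longrightarrow> tent_ci T B' C \<Longrightarrow> tent_ci T B C"
  unfolding tent_ci_def by (metis gconi.simps(1) subset_trans)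

lemma tent_ci_axiom: "CIncl B C \<in> T \<Longrightarrow> tent_ci T B C"
  unfolding tent_ci_def tmodel_def by fastforce

lemma tent_ri_refl: "tent_ri T R (PosR R)"
  by (simp add: tent_ri_def)

lemma tent_ri_trans: "tent_ri T R (PosR R') \<Longrightarrow> tent_ri T R' S \<Longrightarrow> tent_ri T R S"
  unfolding tent_ri_def by (metis grolei.simps(1) subset_trans)

lemma tent_ri_axiom: "RIncl R S \<in> T \<Longrightarrow> tent_ri T R S"
  unfolding tent_ri_def tmodel_def by fastforce

lemma tent_ri_inv: "tent_ri T R (PosR R') \<Longrightarrow> tent_ri T (inv R) (PosR (inv R'))"
  unfolding tent_ri_def by auto

lemma tent_ci_Ex_of_ri: "tent_ri T R (PosR R') \<Longrightarrow> tent_ci T (Ex R) (PosC (Ex R'))"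
  unfolding tent_ri_def tent_ci_def by fastforce

fun asserts_basic :: "('c,'r,'i) assertion \<Rightarrow> 'i \<Rightarrow> ('c,'r) basic \<Rightarrow> bool" where
  "asserts_basic (CAss A b) a B \<longleftrightarrow> b = a \<and> B = AC A"
| "asserts_basic (RAss r b c) a B \<longleftrightarrow> (b = a \<and> B = Ex (RN r)) \<or> (c = a \<and> B = Ex (Inv r))"

fun asserts_role :: "('c,'r,'i) assertion \<Rightarrow> 'i \<Rightarrow> 'i \<Rightarrow> 'r role \<Rightarrow> bool" where
  "asserts_role (CAss A c) a b R \<longleftrightarrow> False"
| "asserts_role (RAss r c d) a b R \<longleftrightarrow> (c = a \<and> d = b \<and> R = RN r) \<or> (d = a \<and> c = b \<and> R = Inv r)"

text \<open>Left-hand sides of DL-Lite inclusions are single basic concepts and roles, so an entailed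
  assertion already follows from a single assertion of the ABox (\<open>kb_ent_basic_iff\<close> below).\<close>

definition derivable_basic ::
  "('c,'r) axiom set \<Rightarrow> ('c,'r,'i) assertion set \<Rightarrow> ('c,'r) basic \<Rightarrow> 'i \<Rightarrow> bool" where
  "derivable_basic T S B a \<longleftrightarrow> (\<exists>g\<in>S. \<exists>B0. asserts_basic g a B0 \<and> tent_ci T B0 (PosC B))"

definition derivable_role ::
  "('c,'r) axiom set \<Rightarrow> ('c,'r,'i) assertion set \<Rightarrow> 'r role \<Rightarrow> 'i \<Rightarrow> 'i \<Rightarrow> bool" where
  "derivable_role T S R a b \<longleftrightarrow> (\<exists>g\<in>S. \<exists>R0. asserts_role g a b R0 \<and> tent_ri T R0 (PosR R))"

lemma constA_singleton [simp]: "constA {g} = acon g"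
  by (simp add: constA_def)

lemma constA_mono: "S \<subseteq> S' \<Longrightarrow> constA S \<subseteq> constA S'"
  by (auto simp: constA_def)

lemma derivable_basic_singleton_acon: "derivable_basic T {g} B a \<Longrightarrow> a \<in> acon g"
  unfolding derivable_basic_def by (cases g) auto

lemma derivable_role_singleton_acon: "derivable_role T {g} R a b \<Longrightarrow> a \<in> acon g \<and> b \<in> acon g"
  unfolding derivable_role_def by (cases g) auto

lemma derivable_basic_iff_singleton: "derivable_basic T S B a \<longleftrightarrow> (\<exists>g\<in>S. derivable_basic T {g} B a)"
  unfolding derivable_basic_def by auto

lemma derivable_role_iff_singleton: "derivable_role T S R a b \<longleftrightarrow> (\<exists>g\<in>S. derivable_role T {g} R a b)"
  unfolding derivable_role_def by auto

lemma derivable_basic_mono: "derivable_basic T S B a \<Longrightarrow> S \<subseteq> S' \<Longrightarrow> derivable_basic T S' B a"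
  unfolding derivable_basic_def by auto

lemma derivable_role_mono: "derivable_role T S R a b \<Longrightarrow> S \<subseteq> S' \<Longrightarrow> derivable_role T S' R a b"
  unfolding derivable_role_def by auto

lemma derivable_basic_tent: "derivable_basic T S B a \<Longrightarrow> tent_ci T B (PosC B') \<Longrightarrow> derivable_basic T S B' a"
  unfolding derivable_basic_def by (meson tent_ci_trans)

lemma derivable_role_tent: "derivable_role T S R a b \<Longrightarrow> tent_ri T R (PosR R') \<Longrightarrow> derivable_role T S R' a b"
  unfolding derivable_role_def by (meson tent_ri_trans)

lemma derivable_role_inv: "derivable_role T S R a b \<Longrightarrow> derivable_role T S (inv R) b a"
proof -
  assume "derivable_role T S R a b"
  then obtain g R0 where "g \<in> S" "asserts_role g a b R0" "tent_ri T R0 (PosR R)"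
    unfolding derivable_role_def by blast
  moreover from \<open>asserts_role g a b R0\<close> have "asserts_role g b a (inv R0)"
    by (cases g) auto
  ultimately show ?thesis
    unfolding derivable_role_def by (blast intro: tent_ri_inv)
qed

lemma derivable_basic_Ex: "derivable_role T S R a b \<Longrightarrow> derivable_basic T S (Ex R) a"
proof -
  assume "derivable_role T S R a b"
  then obtain g R0 where "g \<in> S" "asserts_role g a b R0" "tent_ri T R0 (PosR R)"
    unfolding derivable_role_def by blast
  moreover from \<open>asserts_role g a b R0\<close> have "asserts_basic g a (Ex R0)"
    by (cases g) auto
  ultimately show ?thesis
    unfolding derivable_basic_def by (blast intro: tent_ci_Ex_of_ri)
qed

lemma derivable_basic_sound:
  assumes "model T S I" "derivable_basic T S B a"
  shows "indI I a \<in> basici I B"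
proof -
  obtain g B0 where g: "g \<in> S" "asserts_basic g a B0" "tent_ci T B0 (PosC B)"
    using assms(2) unfolding derivable_basic_def by blast
  from assms(1) g(1) have "sat_assertion I g"
    by (simp add: model_def)
  with g(2) have "indI I a \<in> basici I B0"
    by (cases g) auto
  with g(3) assms(1) show ?thesis
    using tent_ciD by (fastforce simp: model_def)
qed

lemma derivable_role_sound:
  assumes "model T S I" "derivable_role T S R a b"
  shows "(indI I a, indI I b) \<in> rolei I R"
proof -
  obtain g R0 where g: "g \<in> S" "asserts_role g a b R0" "tent_ri T R0 (PosR R)"
    using assms(2) unfolding derivable_role_def by blast
  from assms(1) g(1) have "sat_assertion I g"
    by (simp add: model_def)
  with g(2) have "(indI I a, indI I b) \<in> rolei I R0"
    by (cases g) auto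
  with g(3) assms(1) show ?thesis
    using tent_riD by (fastforce simp: model_def)
qed

section \<open>The canonical model\<close>

lemma successively_iff_nth:
  "successively P xs \<longleftrightarrow> (\<forall>i. Suc i < length xs \<longrightarrow> P (xs ! i) (xs ! Suc i))"
proof (induction xs rule: induct_list012)
  case (3 x y zs)
  have "(\<forall>i. Suc i < length (x # y # zs) \<longrightarrow> P ((x # y # zs) ! i) ((x # y # zs) ! Suc i)) \<longleftrightarrow>
        P x y \<and> (\<forall>i. Suc i < length (y # zs) \<longrightarrow> P ((y # zs) ! i) ((y # zs) ! Suc i))"
    by (auto simp: nth_Cons split: nat.splits)
  then show ?case using 3 by simp
qed simp_all

definition tbox_link :: "('c,'r) axiom set \<Rightarrow> 'r role \<Rightarrow> 'r role \<Rightarrow> bool" where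
  "tbox_link T R R' \<longleftrightarrow> tent_ci T (Ex (inv R)) (PosC (Ex R')) \<and> inv R \<noteq> R'"

definition can_dom :: "('c,'r) axiom set \<Rightarrow> ('c,'r,'i) assertion set \<Rightarrow> 'i \<times> 'r role list \<Rightarrow> bool" where
  "can_dom T S w \<longleftrightarrow> fst w \<in> constA S \<and>
     (snd w \<noteq> [] \<longrightarrow>
        derivable_basic T S (Ex (hd (snd w))) (fst w) \<and>
        \<not> (\<exists>b\<in>constA S. derivable_role T S (hd (snd w)) (fst w) b) \<and>
        successively (tbox_link T) (snd w))"

definition can_basic ::
  "('c,'r) axiom set \<Rightarrow> ('c,'r,'i) assertion set \<Rightarrow> ('c,'r) basic \<Rightarrow> 'i \<times> 'r role list \<Rightarrow> bool" where
  "can_basic T S B w \<longleftrightarrow> can_dom T S w \<and>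
     (if snd w = [] then derivable_basic T S B (fst w)
      else tent_ci T (Ex (inv (last (snd w)))) (PosC B))"

definition can_role :: "('c,'r) axiom set \<Rightarrow> ('c,'r,'i) assertion set \<Rightarrow> 'r role \<Rightarrow>
    'i \<times> 'r role list \<Rightarrow> 'i \<times> 'r role list \<Rightarrow> bool" where
  "can_role T S R w w' \<longleftrightarrow> can_dom T S w \<and> can_dom T S w' \<and>
     ((snd w = [] \<and> snd w' = [] \<and> derivable_role T S R (fst w) (fst w')) \<or>
      (\<exists>R'. fst w' = fst w \<and> snd w' = snd w @ [R'] \<and> tent_ri T R' (PosR R)) \<or>
      (\<exists>R'. fst w = fst w' \<and> snd w = snd w' @ [R'] \<and> tent_ri T R' (PosR (inv R))))"

text \<open>The canonical model of \<open>(S, T)\<close>, with the KB entailments in its definition replaced by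
  their characterisation through single assertions, so that it can be shown to be a model
  before those entailments are known; for consistent KBs it agrees with \<^const>\<open>cm_dom\<close>,
  \<^const>\<open>cm_con\<close> and \<^const>\<open>cm_role\<close>.\<close>

definition can_model :: "('c,'r) axiom set \<Rightarrow> ('c,'r,'i) assertion set \<Rightarrow> ('c,'r,'i) kinterp" where
  "can_model T S = \<lparr>conI = (\<lambda>A. {w. can_basic T S (AC A) w}),
                    roleI = (\<lambda>r. {(w, w'). can_role T S (RN r) w w'}), indI = (\<lambda>a. (a, []))\<rparr>"

lemma can_dom_Nil [simp]: "can_dom T S (a, []) \<longleftrightarrow> a \<in> constA S"
  by (simp add: can_dom_def)

lemma can_dom_single:
  "can_dom T S (a, [R]) \<longleftrightarrow>
     a \<in> constA S \<and> derivable_basic T S (Ex R) a \<and> \<not> (\<exists>b\<in>constA S. derivable_role T S R a b)"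
  by (simp add: can_dom_def)

lemma can_dom_snoc:
  "ws \<noteq> [] \<Longrightarrow> can_dom T S (a, ws @ [R]) \<longleftrightarrow> can_dom T S (a, ws) \<and> tbox_link T (last ws) R"
  by (auto simp: can_dom_def successively_append_iff)

lemma can_dom_prefix: "can_dom T S (a, ws @ [R]) \<Longrightarrow> can_dom T S (a, ws)"
  by (cases "ws = []") (simp_all add: can_dom_single can_dom_snoc)

lemma can_basic_Ex_of_can_dom_snoc: "can_dom T S (a, ws @ [R]) \<Longrightarrow> can_basic T S (Ex R) (a, ws)"
  by (cases "ws = []") (auto simp: can_basic_def can_dom_single can_dom_snoc tbox_link_def)

lemma can_basic_tent: "can_basic T S B w \<Longrightarrow> tent_ci T B (PosC B') \<Longrightarrow> can_basic T S B' w"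
  unfolding can_basic_def by (auto intro: derivable_basic_tent tent_ci_trans)

lemma can_role_tent: "can_role T S R w w' \<Longrightarrow> tent_ri T R (PosR R') \<Longrightarrow> can_role T S R' w w'"
  unfolding can_role_def by (auto intro: derivable_role_tent tent_ri_trans dest: tent_ri_inv)

lemma can_role_inv: "can_role T S (inv R) w w' \<longleftrightarrow> can_role T S R w' w"
  unfolding can_role_def
  using derivable_role_inv[of T S R "fst w'" "fst w"] derivable_role_inv[of T S "inv R" "fst w" "fst w'"]
  by auto

lemma can_basic_Ex_of_can_role:
  assumes "can_role T S R w w'"
  shows "can_basic T S (Ex R) w"
  using assms unfolding can_role_def
proof (elim conjE disjE exE)
  assume "can_dom T S w" "snd w = []" "derivable_role T S R (fst w) (fst w')"
  then show ?thesis
    by (simp add: can_basic_def derivable_basic_Ex)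
next
  fix R' assume "can_dom T S w'" "fst w' = fst w" "snd w' = snd w @ [R']" "tent_ri T R' (PosR R)"
  then show ?thesis
    by (metis can_basic_Ex_of_can_dom_snoc can_basic_tent prod.collapse tent_ci_Ex_of_ri)
next
  fix R' assume "can_dom T S w" "snd w = snd w' @ [R']" "tent_ri T R' (PosR (inv R))"
  then show ?thesis
    using tent_ci_Ex_of_ri[OF tent_ri_inv] by (fastforce simp: can_basic_def)
qed

lemma can_role_successor:
  assumes "can_basic T S (Ex R) (a, ws)"
  obtains w' where "can_role T S R (a, ws) w'"
proof (cases "ws = []")
  case True
  with assms have a: "a \<in> constA S" "derivable_basic T S (Ex R) a"
    by (auto simp: can_basic_def can_dom_def)
  show ?thesis
  proof (cases "\<exists>b\<in>constA S. derivable_role T S R a b")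
    case True
    then obtain b where "b \<in> constA S" "derivable_role T S R a b" ..
    with a \<open>ws = []\<close> have "can_role T S R (a, ws) (b, [])"
      by (simp add: can_role_def)
    then show ?thesis ..
  next
    case False
    with a \<open>ws = []\<close> have "can_role T S R (a, ws) (a, [R])"
      by (simp add: can_role_def can_dom_single tent_ri_refl)
    then show ?thesis ..
  qed
next
  case False
  with assms have dom: "can_dom T S (a, ws)" and link: "tent_ci T (Ex (inv (last ws))) (PosC (Ex R))"
    by (simp_all add: can_basic_def)
  have ws: "ws = butlast ws @ [last ws]"
    using False by simp
  show ?thesis
  proof (cases "R = inv (last ws)")
    case True
    have "can_dom T S (a, butlast ws)"
      using dom ws can_dom_prefix by metis
    with dom ws True have "can_role T S R (a, ws) (a, butlast ws)"
      unfolding can_role_def by (metis fst_conv snd_conv inv_inv tent_ri_refl)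
    then show ?thesis ..
  next
    case False
    with dom link \<open>ws \<noteq> []\<close> have "can_dom T S (a, ws @ [R])"
      by (auto simp: can_dom_snoc tbox_link_def)
    with dom have "can_role T S R (a, ws) (a, ws @ [R])"
      by (simp add: can_role_def tent_ri_refl)
    then show ?thesis ..
  qed
qed

lemma rolei_can_model: "rolei (can_model T S) R = {(w, w'). can_role T S R w w'}"
  by (cases R) (auto simp: can_model_def can_role_inv[of T S "RN r" for r, simplified, symmetric])

lemma basici_can_model: "basici (can_model T S) B = {w. can_basic T S B w}"
proof (cases B)
  case (Ex R)
  have "w \<in> Domain {(w, w'). can_role T S R w w'} \<longleftrightarrow> can_basic T S (Ex R) w" for w
  proof
    assume "w \<in> Domain {(w, w'). can_role T S R w w'}"
    then show "can_basic T S (Ex R) w"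
      by (auto intro: can_basic_Ex_of_can_role)
  next
    assume "can_basic T S (Ex R) w"
    then obtain w' where "can_role T S R w w'"
      by (metis can_role_successor prod.collapse)
    then show "w \<in> Domain {(w, w'). can_role T S R w w'}"
      by blast
  qed
  with Ex show ?thesis
    by (simp add: rolei_can_model)
qed (simp add: can_model_def)

text \<open>Following \<^const>\<open>some_succ\<close> along a word maps the canonical model homomorphically into
  every model of the KB.\<close>

definition realize :: "('c,'r,'i,'d) interp \<Rightarrow> 'i \<times> 'r role list \<Rightarrow> 'd" where
  "realize I w = foldl (some_succ I) (indI I (fst w)) (snd w)"

lemma realize_basic:
  assumes "model T S I" "can_basic T S B (a, ws)"
  shows "realize I (a, ws) \<in> basici I B"
  using assms(2)
proof (induction ws arbitrary: B rule: rev_induct)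
  case Nil
  then show ?case
    using derivable_basic_sound[OF assms(1)] by (simp add: realize_def can_basic_def)
next
  case (snoc R ws)
  then have "can_basic T S (Ex R) (a, ws)"
    by (intro can_basic_Ex_of_can_dom_snoc) (simp add: can_basic_def)
  then have "realize I (a, ws) \<in> basici I (Ex R)"
    by (rule snoc.IH)
  then have "(realize I (a, ws), realize I (a, ws @ [R])) \<in> rolei I R"
    by (simp add: realize_def some_succ_in_rolei)
  then have "realize I (a, ws @ [R]) \<in> basici I (Ex (inv R))"
    by auto
  moreover have "tent_ci T (Ex (inv R)) (PosC B)"
    using snoc.prems by (simp add: can_basic_def)
  moreover have "tmodel T I"
    using assms(1) by (simp add: model_def)
  ultimately show ?case
    using tent_ciD by fastforce
qed

lemma realize_edge:
  assumes "model T S I" "can_dom T S (a, ws @ [R])"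
  shows "(realize I (a, ws), realize I (a, ws @ [R])) \<in> rolei I R"
  using realize_basic[OF assms(1) can_basic_Ex_of_can_dom_snoc[OF assms(2)]]
  by (simp add: realize_def some_succ_in_rolei)

lemma realize_role:
  assumes I: "model T S I" and role: "can_role T S R (a, ws) (b, ws')"
  shows "(realize I (a, ws), realize I (b, ws')) \<in> rolei I R"
proof -
  have "tmodel T I"
    using I by (simp add: model_def)
  consider "ws = []" "ws' = []" "derivable_role T S R a b"
    | R' where "can_dom T S (a, ws @ [R'])" "b = a" "ws' = ws @ [R']" "tent_ri T R' (PosR R)"
    | R' where "can_dom T S (b, ws' @ [R'])" "a = b" "ws = ws' @ [R']" "tent_ri T R' (PosR (inv R))"
    using role unfolding can_role_def by fastforce
  then show ?thesis
  proof cases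
    case 1
    then show ?thesis
      using derivable_role_sound[OF I] by (simp add: realize_def)
  next
    case 2
    then show ?thesis
      using tent_riD[OF 2(4) \<open>tmodel T I\<close> realize_edge[OF I 2(1)]] by simp
  next
    case 3
    then show ?thesis
      using tent_riD[OF 3(4) \<open>tmodel T I\<close> realize_edge[OF I 3(1)]] by simp
  qed
qed

lemma sat_axiom_can_model:
  assumes "model T S M" "ax \<in> T"
  shows "sat_axiom (can_model T S) ax"
proof -
  have M: "sat_axiom M ax"
    using assms by (simp add: model_def tmodel_def)
  show ?thesis
  proof (cases ax)
    case (CIncl B C)
    then have "tent_ci T B C"
      using assms(2) by (simp add: tent_ci_axiom)
    show ?thesis
    proof (cases C)
      case (PosC B')
      then show ?thesis
        using CIncl \<open>tent_ci T B C\<close> by (auto simp: basici_can_model intro: can_basic_tent)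
    next
      case (NegC B')
      have "\<not> (can_basic T S B (a, ws) \<and> can_basic T S B' (a, ws))" for a ws
        using realize_basic[OF assms(1), of B a ws] realize_basic[OF assms(1), of B' a ws] M CIncl NegC
        by auto
      then show ?thesis
        using CIncl NegC by (auto simp: basici_can_model)
    qed
  next
    case (RIncl R R0)
    then have "tent_ri T R R0"
      using assms(2) by (simp add: tent_ri_axiom)
    show ?thesis
    proof (cases R0)
      case (PosR R')
      then show ?thesis
        using RIncl \<open>tent_ri T R R0\<close> by (auto simp: rolei_can_model intro: can_role_tent)
    next
      case (NegR R')
      have "\<not> (can_role T S R (a, ws) (b, ws') \<and> can_role T S R' (a, ws) (b, ws'))" for a ws b ws'
        using realize_role[OF assms(1), of R a ws b ws'] realize_role[OF assms(1), of R' a ws b ws'] M RIncl NegR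
        by auto
      then show ?thesis
        using RIncl NegR by (auto simp: rolei_can_model)
    qed
  qed
qed

lemma sat_assertion_can_model:
  assumes "f \<in> S"
  shows "sat_assertion (can_model T S) f"
proof -
  have const: "acon f \<subseteq> constA S"
    using assms by (auto simp: constA_def)
  show ?thesis
  proof (cases f)
    case (CAss A a)
    have "derivable_basic T S (AC A) a"
      unfolding derivable_basic_def using assms CAss
      by (intro bexI[of _ f] exI[of _ "AC A"]) (simp_all add: tent_ci_refl)
    then show ?thesis
      using CAss const by (simp add: can_model_def can_basic_def)
  next
    case (RAss r a b)
    have "derivable_role T S (RN r) a b"
      unfolding derivable_role_def using assms RAss
      by (intro bexI[of _ f] exI[of _ "RN r"]) (simp_all add: tent_ri_refl)
    then show ?thesis
      using RAss const by (simp add: can_model_def can_role_def)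
  qed
qed

lemma model_can_model:
  fixes T :: "('c,'r) axiom set" and S :: "('c,'r,'i) assertion set"
  assumes "consistent T S"
  shows "model T S (can_model T S)"
proof -
  obtain M :: "('c,'r,'i) kinterp" where M: "model T S M"
    using assms by (auto simp: consistent_def)
  show ?thesis
    unfolding model_def tmodel_def by (blast intro: sat_axiom_can_model[OF M] sat_assertion_can_model)
qed

lemma indI_can_model [simp]: "indI (can_model T S) a = (a, [])"
  by (simp add: can_model_def)

lemma sat_atom_realize:
  assumes "model T S I" "sat_atom (can_model T S) h \<alpha>"
  shows "sat_atom I (realize I \<circ> h) \<alpha>"
proof (cases \<alpha>)
  case (CAtom A x)
  with assms show ?thesis
    using realize_basic[OF assms(1), of "AC A" "fst (h x)" "snd (h x)"] by (simp add: can_model_def)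
next
  case (RAtom r x y)
  with assms show ?thesis
    using realize_role[OF assms(1), of "RN r" "fst (h x)" "snd (h x)" "fst (h y)" "snd (h y)"]
    by (simp add: can_model_def)
qed

lemma entails_iff_holds_q_can_model:
  fixes T :: "('c,'r) axiom set" and S :: "('c,'r,'i) assertion set" and q :: "('c,'r,'v) atom set"
  assumes "consistent T S"
  shows "entails T S q \<longleftrightarrow> holds_q q (can_model T S)"
  unfolding entails_def holds_q_def
  using model_can_model[OF assms] sat_atom_realize by blast

lemma kb_ent_basic_iff:
  fixes T :: "('c,'r) axiom set" and S :: "('c,'r,'i) assertion set"
  assumes "consistent T S"
  shows "(\<forall>I :: ('c,'r,'i) kinterp. model T S I \<longrightarrow> indI I a \<in> basici I B) \<longleftrightarrow> derivable_basic T S B a"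
proof
  assume "\<forall>I :: ('c,'r,'i) kinterp. model T S I \<longrightarrow> indI I a \<in> basici I B"
  then have "indI (can_model T S) a \<in> basici (can_model T S) B"
    using model_can_model[OF assms] by blast
  then show "derivable_basic T S B a"
    by (simp add: basici_can_model can_basic_def)
qed (use derivable_basic_sound in auto)

lemma kb_ent_role_iff:
  fixes T :: "('c,'r) axiom set" and S :: "('c,'r,'i) assertion set"
  assumes "consistent T S"
  shows "kb_ent_role T S R a b \<longleftrightarrow> derivable_role T S R a b"
proof
  assume "kb_ent_role T S R a b"
  then have "(indI (can_model T S) a, indI (can_model T S) b) \<in> rolei (can_model T S) R"
    using model_can_model[OF assms] unfolding kb_ent_role_def by blast
  then show "derivable_role T S R a b"
    by (simp add: rolei_can_model can_role_def)
qed (use derivable_role_sound in \<open>auto simp: kb_ent_role_def\<close>)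

lemma kb_ent_ex_iff: "consistent T S \<Longrightarrow> kb_ent_ex T S R a \<longleftrightarrow> derivable_basic T S (Ex R) a"
  unfolding kb_ent_ex_def by (rule kb_ent_basic_iff)

lemma kb_ent_con_iff: "consistent T S \<Longrightarrow> kb_ent_con T S A a \<longleftrightarrow> derivable_basic T S (AC A) a"
  unfolding kb_ent_con_def using kb_ent_basic_iff[of T S a "AC A"] by simp

lemma cm_dom_iff: "consistent T S \<Longrightarrow> cm_dom T S w \<longleftrightarrow> can_dom T S w"
  by (simp add: cm_dom_def can_dom_def kb_ent_ex_iff kb_ent_role_iff
                successively_iff_nth tbox_link_def)

lemma cm_con_iff: "consistent T S \<Longrightarrow> cm_con T S A w \<longleftrightarrow> can_basic T S (AC A) w"
  by (simp add: cm_con_def can_basic_def cm_dom_iff kb_ent_con_iff)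

lemma cm_role_iff: "consistent T S \<Longrightarrow> cm_role T S r w w' \<longleftrightarrow> can_role T S (RN r) w w'"
  by (simp add: cm_role_def can_role_def cm_dom_iff kb_ent_role_iff)

lemma sat_atom_can_model: "consistent T S \<Longrightarrow> sat_atom (can_model T S) h \<alpha> \<longleftrightarrow> cm_atom T S h \<alpha>"
  by (cases \<alpha>) (simp_all add: can_model_def cm_con_iff cm_role_iff)

section \<open>Locality of matches in the canonical model\<close>

lemma can_dom_singletonI:
  assumes "can_dom T S w" "g \<in> S" "fst w \<in> acon g"
    "snd w \<noteq> [] \<Longrightarrow> derivable_basic T {g} (Ex (hd (snd w))) (fst w)"
  shows "can_dom T {g} w"
  unfolding can_dom_def
proof (intro conjI impI)
  show "fst w \<in> constA {g}"
    using assms(3) by simp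
  assume "snd w \<noteq> []"
  then show "derivable_basic T {g} (Ex (hd (snd w))) (fst w)" "successively (tbox_link T) (snd w)"
    using assms(1,4) by (simp_all add: can_dom_def)
  have "acon g \<subseteq> constA S"
    using assms(2) by (auto simp: constA_def)
  show "\<not> (\<exists>b\<in>constA {g}. derivable_role T {g} (hd (snd w)) (fst w) b)"
  proof
    assume "\<exists>b\<in>constA {g}. derivable_role T {g} (hd (snd w)) (fst w) b"
    then obtain b where "b \<in> acon g" "derivable_role T {g} (hd (snd w)) (fst w) b"
      by auto
    with \<open>acon g \<subseteq> constA S\<close> assms(2) have "b \<in> constA S" "derivable_role T S (hd (snd w)) (fst w) b"
      by (auto intro: derivable_role_mono[of T "{g}" _ _ _ S])
    with assms(1) \<open>snd w \<noteq> []\<close> show False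
      by (auto simp: can_dom_def)
  qed
qed

lemma can_dom_singleton:
  assumes "can_dom T S w"
  obtains g where "g \<in> S" "can_dom T {g} w"
proof (cases "snd w = []")
  case True
  from assms obtain g where g: "g \<in> S" "fst w \<in> acon g"
    by (auto simp: can_dom_def constA_def)
  show ?thesis
    by (intro that[OF g(1)] can_dom_singletonI[OF assms g]) (simp add: True)
next
  case False
  with assms obtain g where g: "g \<in> S" "derivable_basic T {g} (Ex (hd (snd w))) (fst w)"
    by (auto simp: can_dom_def derivable_basic_iff_singleton[of T S])
  show ?thesis
    by (intro that[OF g(1)] can_dom_singletonI[OF assms g(1)] derivable_basic_singleton_acon[OF g(2)] g(2))
qed

text \<open>The canonical model is not monotone in the ABox: an anonymous successor disappears once a
  named one becomes derivable. It is, however, between a single assertion and a larger ABox.\<close>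

lemma can_dom_between:
  assumes "can_dom T S w" "can_dom T {g} w" "g \<in> S'" "S' \<subseteq> S"
  shows "can_dom T S' w"
  unfolding can_dom_def
proof (intro conjI impI)
  have "acon g \<subseteq> constA S'"
    using assms(3) by (auto simp: constA_def)
  then show "fst w \<in> constA S'"
    using assms(2) by (auto simp: can_dom_def)
  assume "snd w \<noteq> []"
  moreover have "{g} \<subseteq> S'"
    using assms(3) by simp
  ultimately show "derivable_basic T S' (Ex (hd (snd w))) (fst w)"
    using assms(2) derivable_basic_mono[of T "{g}" _ _ S'] unfolding can_dom_def by blast
  show "successively (tbox_link T) (snd w)"
    using assms(1) \<open>snd w \<noteq> []\<close> by (simp add: can_dom_def)
  have "constA S' \<subseteq> constA S"
    using assms(4) by (rule constA_mono)
  with \<open>snd w \<noteq> []\<close> assms(1,4) show "\<not> (\<exists>b\<in>constA S'. derivable_role T S' (hd (snd w)) (fst w) b)"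
    using derivable_role_mono[of T S' _ _ _ S] unfolding can_dom_def by blast
qed

lemma can_basic_singleton:
  assumes "can_basic T S B w"
  obtains g where "g \<in> S" "can_basic T {g} B w"
proof (cases "snd w = []")
  case True
  with assms obtain g where g: "g \<in> S" "derivable_basic T {g} B (fst w)"
    by (auto simp: can_basic_def derivable_basic_iff_singleton[of T S])
  from g(2) have "fst w \<in> acon g"
    by (rule derivable_basic_singleton_acon)
  with g True show ?thesis
    using that by (simp add: can_basic_def can_dom_def)
next
  case False
  from assms have "can_dom T S w"
    by (simp add: can_basic_def)
  then obtain g where "g \<in> S" "can_dom T {g} w"
    by (rule can_dom_singleton)
  with assms False show ?thesis
    using that by (simp add: can_basic_def)
qed

lemma can_basic_between:
  assumes "can_basic T S B w" "can_basic T {g} B w" "g \<in> S'" "S' \<subseteq> S"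
  shows "can_basic T S' B w"
proof -
  have "can_dom T S' w"
    using assms(1,2) can_dom_between[OF _ _ assms(3,4)] by (simp add: can_basic_def)
  moreover have "derivable_basic T S' B (fst w)" if "derivable_basic T {g} B (fst w)"
    using assms(3) by (intro derivable_basic_mono[OF that]) simp
  ultimately show ?thesis
    using assms(2) by (simp add: can_basic_def)
qed

lemma can_role_singleton:
  assumes "can_role T S R (a, ws) (b, ws')"
  obtains g where "g \<in> S" "can_role T {g} R (a, ws) (b, ws')"
proof -
  consider "ws = []" "ws' = []" "derivable_role T S R a b"
    | R' where "b = a" "ws' = ws @ [R']" "can_dom T S (a, ws @ [R'])" "tent_ri T R' (PosR R)"
    | R' where "a = b" "ws = ws' @ [R']" "can_dom T S (b, ws' @ [R'])" "tent_ri T R' (PosR (inv R))"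
    using assms unfolding can_role_def by fastforce
  then show ?thesis
  proof cases
    case 1
    then obtain g where g: "g \<in> S" "derivable_role T {g} R a b"
      using derivable_role_iff_singleton[of T S] by blast
    with 1 show ?thesis
      using derivable_role_singleton_acon[OF g(2)] that[OF g(1)] by (simp add: can_role_def)
  next
    case 2
    then obtain g where "g \<in> S" "can_dom T {g} (a, ws @ [R'])"
      using can_dom_singleton[OF 2(3)] by blast
    moreover from this(2) have "can_dom T {g} (a, ws)"
      by (rule can_dom_prefix)
    ultimately show ?thesis
      using 2 that by (simp add: can_role_def)
  next
    case 3
    then obtain g where "g \<in> S" "can_dom T {g} (b, ws' @ [R'])"
      using can_dom_singleton[OF 3(3)] by blast
    moreover from this(2) have "can_dom T {g} (b, ws')"
      by (rule can_dom_prefix)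
    ultimately show ?thesis
      using 3 that by (simp add: can_role_def)
  qed
qed

lemma can_role_between:
  assumes "can_role T S R w w'" "can_role T {g} R w w'" "g \<in> S'" "S' \<subseteq> S"
  shows "can_role T S' R w w'"
proof -
  have "can_dom T S' w" "can_dom T S' w'"
    using assms(1,2) can_dom_between[OF _ _ assms(3,4)] by (simp_all add: can_role_def)
  moreover have "derivable_role T S' R (fst w) (fst w')" if "derivable_role T {g} R (fst w) (fst w')"
    using assms(3) by (intro derivable_role_mono[OF that]) simp
  ultimately show ?thesis
    using assms(2) unfolding can_role_def by blast
qed

lemma consistent_subset: "consistent T S \<Longrightarrow> S' \<subseteq> S \<Longrightarrow> consistent T S'"
  unfolding consistent_def model_def by blast

lemma entails_iff_cm_atoms:
  fixes T :: "('c,'r) axiom set" and S :: "('c,'r,'i) assertion set" and q :: "('c,'r,'v) atom set"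
  assumes "consistent T S"
  shows "entails T S q \<longleftrightarrow> (\<exists>h. \<forall>\<alpha>\<in>q. cm_atom T S h \<alpha>)"
  using assms by (simp add: entails_iff_holds_q_can_model holds_q_def sat_atom_can_model)

lemma cm_atom_singleton:
  assumes "consistent T S" "cm_atom T S h \<alpha>"
  obtains g where "g \<in> S" "cm_atom T {g} h \<alpha>"
proof (cases \<alpha>)
  case (CAtom A x)
  with assms have "can_basic T S (AC A) (h x)"
    by (simp add: cm_con_iff)
  then obtain g where g: "g \<in> S" "can_basic T {g} (AC A) (h x)"
    by (rule can_basic_singleton)
  moreover from g(1) have "consistent T {g}"
    using consistent_subset[OF assms(1)] by simp
  ultimately show ?thesis
    using CAtom that by (simp add: cm_con_iff)
next
  case (RAtom r x y)
  with assms have "can_role T S (RN r) (fst (h x), snd (h x)) (fst (h y), snd (h y))"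
    by (simp add: cm_role_iff)
  then obtain g where g: "g \<in> S" "can_role T {g} (RN r) (h x) (h y)"
    by (rule can_role_singleton) simp
  moreover from g(1) have "consistent T {g}"
    using consistent_subset[OF assms(1)] by simp
  ultimately show ?thesis
    using RAtom that by (simp add: cm_role_iff)
qed

lemma cm_atom_between:
  assumes "consistent T S" "cm_atom T S h \<alpha>" "cm_atom T {g} h \<alpha>" "g \<in> S'" "S' \<subseteq> S"
  shows "cm_atom T S' h \<alpha>"
proof -
  have "consistent T {g}" "consistent T S'"
    using consistent_subset[OF assms(1)] assms(4,5) by auto
  with assms show ?thesis
    using can_basic_between[OF _ _ assms(4,5)] can_role_between[OF _ _ assms(4,5)]
    by (cases \<alpha>) (simp_all add: cm_con_iff cm_role_iff)
qed

lemma cm_atom_fst_in_constA: "cm_atom T S h \<alpha> \<Longrightarrow> x \<in> avars \<alpha> \<Longrightarrow> fst (h x) \<in> constA S"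
  by (cases \<alpha>) (auto simp: cm_con_def cm_role_def cm_dom_def)

text \<open>A match of \<open>\<alpha>\<close> in the canonical model of a single assertion \<open>f\<close> is recorded by the map
  sending each variable to its image if that is an individual and to \<open>\<circledast>\<close> (\<^const>\<open>None\<close>)
  if it is anonymous.\<close>

lemma ent_mu_of_cm_atom:
  assumes "cm_atom T {f} h \<alpha>"
  defines "\<mu> \<equiv> \<lambda>x. if snd (h x) = [] then Some (fst (h x)) else None"
  shows "valid_mu f \<alpha> \<mu>" "ent_mu T f \<alpha> \<mu>"
proof -
  show "valid_mu f \<alpha> \<mu>"
    using cm_atom_fst_in_constA[OF assms(1)] by (auto simp: valid_mu_def \<mu>_def)
  have "\<forall>x\<in>avars \<alpha>. (case \<mu> x of Some c \<Rightarrow> h x = (c, []) | None \<Rightarrow> snd (h x) \<noteq> [])"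
    by (auto simp: \<mu>_def prod_eq_iff)
  with assms(1) show "ent_mu T f \<alpha> \<mu>"
    unfolding ent_mu_def by blast
qed

lemma min_support_assertion_matches_atom:
  fixes T :: "('c,'r) axiom set" and A S :: "('c,'r,'i) assertion set" and q :: "('c,'r,'v) atom set"
  assumes "consistent T S" "S \<in> min_supports T q A" "f \<in> S"
  shows "\<exists>\<alpha>\<in>q. \<exists>\<mu>. valid_mu f \<alpha> \<mu> \<and> ent_mu T f \<alpha> \<mu>"
proof (rule ccontr)
  assume unmatched: "\<not> (\<exists>\<alpha>\<in>q. \<exists>\<mu>. valid_mu f \<alpha> \<mu> \<and> ent_mu T f \<alpha> \<mu>)"
  have "entails T S q"
    using assms(2) by (simp add: min_supports_def)
  then obtain h where h: "\<And>\<alpha>. \<alpha> \<in> q \<Longrightarrow> cm_atom T S h \<alpha>"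
    using entails_iff_cm_atoms[OF assms(1)] by blast
  txt \<open>Every atom is matched in the canonical model of a single assertion; if that is never
    \<open>f\<close>, the whole match survives in the canonical model of \<open>S - {f}\<close>.\<close>
  have "cm_atom T (S - {f}) h \<alpha>" if \<alpha>: "\<alpha> \<in> q" for \<alpha>
  proof -
    obtain g where g: "g \<in> S" "cm_atom T {g} h \<alpha>"
      using cm_atom_singleton[OF assms(1) h[OF \<alpha>]] by blast
    have "g \<noteq> f"
    proof
      assume "g = f"
      with g(2) have "cm_atom T {f} h \<alpha>"
        by simp
      from ent_mu_of_cm_atom[OF this] unmatched \<alpha> show False
        by blast
    qed
    with g(1) have "g \<in> S - {f}"
      by simp
    then show ?thesis
      by (rule cm_atom_between[OF assms(1) h[OF \<alpha>] g(2)]) blast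
  qed
  then have "entails T (S - {f}) q"
    using entails_iff_cm_atoms[OF consistent_subset[OF assms(1)]] by blast
  moreover have "S - {f} \<subset> S"
    using assms(3) by blast
  ultimately show False
    using assms(2) by (simp add: min_supports_def)
qed

section \<open>Minimal subsets of conjoined monotone properties\<close>

definition minimal_subsets :: "'a set \<Rightarrow> ('a set \<Rightarrow> bool) \<Rightarrow> 'a set set" where
  "minimal_subsets A P = {S. S \<subseteq> A \<and> P S \<and> (\<forall>S'. S' \<subset> S \<longrightarrow> \<not> P S')}"

lemma mono_predD: "mono P \<Longrightarrow> P S \<Longrightarrow> S \<subseteq> S' \<Longrightarrow> P S'"
  unfolding mono_def le_bool_def by blast

lemma minimal_subsetsD:
  assumes "S \<in> minimal_subsets A P"
  shows "S \<subseteq> A" "P S" "S' \<subseteq> S \<Longrightarrow> P S' \<Longrightarrow> S' = S"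
  using assms unfolding minimal_subsets_def by auto

lemma exists_minimal_subset:
  assumes "finite A" "S \<subseteq> A" "P S"
  obtains S0 where "S0 \<in> minimal_subsets A P" "S0 \<subseteq> S"
proof -
  obtain S0 where S0: "S0 \<subseteq> S" "P S0" and least: "\<And>S'. S' \<subseteq> S \<and> P S' \<Longrightarrow> card S0 \<le> card S'"
    using ex_has_least_nat[of "\<lambda>S'. S' \<subseteq> S \<and> P S'" S card] assms(3) by blast
  have "finite S"
    using assms(1,2) by (rule finite_subset[rotated])
  have "\<not> P S'" if "S' \<subset> S0" for S'
    using least[of S'] psubset_card_mono[OF finite_subset[OF S0(1) \<open>finite S\<close>] that] that S0(1)
    by auto
  with S0 assms(2) have "S0 \<in> minimal_subsets A P"
    unfolding minimal_subsets_def by auto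
  then show ?thesis
    using that S0(1) by blast
qed

context
  fixes A :: "'a set" and P1 P2 :: "'a set \<Rightarrow> bool"
  assumes disjoint: "\<And>S1 S2. S1 \<in> minimal_subsets A P1 \<Longrightarrow> S2 \<in> minimal_subsets A P2 \<Longrightarrow> S1 \<inter> S2 = {}"
begin

lemma inj_on_union_minimal_subsets:
  "inj_on (\<lambda>(S1, S2). S1 \<union> S2) (minimal_subsets A P1 \<times> minimal_subsets A P2)"
proof (rule inj_onI, clarify)
  fix S1 S2 S1' S2'
  assume S: "S1 \<in> minimal_subsets A P1" "S2 \<in> minimal_subsets A P2"
    and S': "S1' \<in> minimal_subsets A P1" "S2' \<in> minimal_subsets A P2"
    and eq: "S1 \<union> S2 = S1' \<union> S2'"
  have "S1' \<subseteq> S1" "S2' \<subseteq> S2"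
    using disjoint[OF S'(1) S(2)] disjoint[OF S(1) S'(2)] eq by blast+
  then show "S1 = S1' \<and> S2 = S2'"
    using minimal_subsetsD(3)[OF S(1)] minimal_subsetsD(3)[OF S(2)]
      minimal_subsetsD(2)[OF S'(1)] minimal_subsetsD(2)[OF S'(2)] by blast
qed

lemma minimal_subsets_conj:
  assumes "finite A" "mono P1" "mono P2"
  shows "minimal_subsets A (\<lambda>S. P1 S \<and> P2 S) =
    (\<lambda>(S1, S2). S1 \<union> S2) ` (minimal_subsets A P1 \<times> minimal_subsets A P2)"
    (is "?M = ?U")
proof
  show "?M \<subseteq> ?U"
  proof
    fix S assume S: "S \<in> ?M"
    then have "S \<subseteq> A" "P1 S" "P2 S"
      using minimal_subsetsD(1,2)[OF S] by simp_all
    obtain S1 where S1: "S1 \<in> minimal_subsets A P1" "S1 \<subseteq> S"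
      by (rule exists_minimal_subset[where P = P1, OF assms(1) \<open>S \<subseteq> A\<close> \<open>P1 S\<close>])
    obtain S2 where S2: "S2 \<in> minimal_subsets A P2" "S2 \<subseteq> S"
      by (rule exists_minimal_subset[where P = P2, OF assms(1) \<open>S \<subseteq> A\<close> \<open>P2 S\<close>])
    have "P1 (S1 \<union> S2)" "P2 (S1 \<union> S2)"
      using mono_predD[OF assms(2) minimal_subsetsD(2)[OF S1(1)]]
        mono_predD[OF assms(3) minimal_subsetsD(2)[OF S2(1)]] by simp_all
    with S1(2) S2(2) have "S1 \<union> S2 = S"
      using minimal_subsetsD(3)[OF S, of "S1 \<union> S2"] by simp
    with S1(1) S2(1) show "S \<in> ?U"
      by (intro image_eqI[where x = "(S1, S2)"]) simp_all
  qed
next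
  show "?U \<subseteq> ?M"
  proof clarify
    fix S1 S2 assume S1: "S1 \<in> minimal_subsets A P1" and S2: "S2 \<in> minimal_subsets A P2"
    have "P1 (S1 \<union> S2)" "P2 (S1 \<union> S2)"
      using mono_predD[OF assms(2) minimal_subsetsD(2)[OF S1]]
        mono_predD[OF assms(3) minimal_subsetsD(2)[OF S2]] by simp_all
    moreover have "S1 \<union> S2 \<subseteq> A"
      using minimal_subsetsD(1)[OF S1] minimal_subsetsD(1)[OF S2] by blast
    moreover have "\<not> (P1 S' \<and> P2 S')" if "S' \<subset> S1 \<union> S2" for S'
    proof
      assume P: "P1 S' \<and> P2 S'"
      have "S' \<subseteq> A"
        using \<open>S1 \<union> S2 \<subseteq> A\<close> that by blast
      obtain S1' where S1': "S1' \<in> minimal_subsets A P1" "S1' \<subseteq> S'"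
        using exists_minimal_subset[where P = P1, OF assms(1) \<open>S' \<subseteq> A\<close>] P by blast
      obtain S2' where S2': "S2' \<in> minimal_subsets A P2" "S2' \<subseteq> S'"
        using exists_minimal_subset[where P = P2, OF assms(1) \<open>S' \<subseteq> A\<close>] P by blast
      have "S1' \<subseteq> S1"
        using disjoint[OF S1'(1) S2] S1'(2) that by blast
      then have "S1' = S1"
        using minimal_subsetsD(3)[OF S1] minimal_subsetsD(2)[OF S1'(1)] by blast
      have "S2' \<subseteq> S2"
        using disjoint[OF S1 S2'(1)] S2'(2) that by blast
      then have "S2' = S2"
        using minimal_subsetsD(3)[OF S2] minimal_subsetsD(2)[OF S2'(1)] by blast
      with \<open>S1' = S1\<close> S1'(2) S2'(2) that show False
        by blast
    qed
    ultimately show "S1 \<union> S2 \<in> ?M"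
      unfolding minimal_subsets_def by blast
  qed
qed

lemma card_minimal_subsets_conj:
  assumes "finite A" "mono P1" "mono P2"
  shows "card (minimal_subsets A (\<lambda>S. P1 S \<and> P2 S)) =
    card (minimal_subsets A P1) * card (minimal_subsets A P2)"
  by (simp add: minimal_subsets_conj[OF assms] card_image[OF inj_on_union_minimal_subsets]
                card_cartesian_product)

end

lemma sat_atom_cong: "(\<And>x. x \<in> avars \<alpha> \<Longrightarrow> h x = h' x) \<Longrightarrow> sat_atom I h \<alpha> \<longleftrightarrow> sat_atom I h' \<alpha>"
  by (cases \<alpha>) auto

lemma avars_subset_qvars: "\<alpha> \<in> q \<Longrightarrow> avars \<alpha> \<subseteq> qvars q"
  unfolding qvars_def by blast

lemma avars_nonempty: "avars \<alpha> \<noteq> {}"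
  by (cases \<alpha>) auto

lemma holds_q_union:
  assumes "qvars q1 \<inter> qvars q2 = {}"
  shows "holds_q (q1 \<union> q2) I \<longleftrightarrow> holds_q q1 I \<and> holds_q q2 I"
proof
  assume "holds_q q1 I \<and> holds_q q2 I"
  then obtain h1 h2 where h1: "\<forall>\<alpha>\<in>q1. sat_atom I h1 \<alpha>" and h2: "\<forall>\<alpha>\<in>q2. sat_atom I h2 \<alpha>"
    unfolding holds_q_def by blast
  define h where "h x = (if x \<in> qvars q1 then h1 x else h2 x)" for x
  have "sat_atom I h \<alpha> \<longleftrightarrow> sat_atom I h1 \<alpha>" if "\<alpha> \<in> q1" for \<alpha>
    using avars_subset_qvars[OF that] by (intro sat_atom_cong) (auto simp: h_def)
  moreover have "sat_atom I h \<alpha> \<longleftrightarrow> sat_atom I h2 \<alpha>" if "\<alpha> \<in> q2" for \<alpha>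
    using avars_subset_qvars[OF that] assms by (intro sat_atom_cong) (auto simp: h_def)
  ultimately show "holds_q (q1 \<union> q2) I"
    unfolding holds_q_def using h1 h2 by blast
qed (auto simp: holds_q_def)

lemma entails_mono: "mono (\<lambda>S. entails T S q)"
  unfolding mono_def le_bool_def entails_def model_def by blast

lemma entails_union:
  "qvars q1 \<inter> qvars q2 = {} \<Longrightarrow> entails T S (q1 \<union> q2) \<longleftrightarrow> entails T S q1 \<and> entails T S q2"
  unfolding entails_def by (auto simp: holds_q_union)

lemma min_supports_disjoint:
  fixes T :: "('c,'r) axiom set" and A :: "('c,'r,'i) assertion set" and q1 q2 :: "('c,'r,'v) atom set"
  assumes "consistent T A" "interaction_free T (q1 \<union> q2) TYPE('i)" "qvars q1 \<inter> qvars q2 = {}"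
    and S1: "S1 \<in> min_supports T q1 A" and S2: "S2 \<in> min_supports T q2 A"
  shows "S1 \<inter> S2 = {}"
proof (rule ccontr)
  assume "S1 \<inter> S2 \<noteq> {}"
  then obtain f where f: "f \<in> S1" "f \<in> S2"
    by blast
  have "S1 \<subseteq> A" "S2 \<subseteq> A"
    using S1 S2 by (simp_all add: min_supports_def)
  then have "consistent T S1" "consistent T S2"
    using consistent_subset[OF assms(1)] by blast+
  have "consistent T {f}"
    using consistent_subset[OF \<open>consistent T S1\<close>] f(1) by simp
  obtain \<alpha> \<mu>\<alpha> where \<alpha>: "\<alpha> \<in> q1" "valid_mu f \<alpha> \<mu>\<alpha>" "ent_mu T f \<alpha> \<mu>\<alpha>"
    using min_support_assertion_matches_atom[OF \<open>consistent T S1\<close> S1 f(1)] by blast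
  obtain \<beta> \<mu>\<beta> where \<beta>: "\<beta> \<in> q2" "valid_mu f \<beta> \<mu>\<beta>" "ent_mu T f \<beta> \<mu>\<beta>"
    using min_support_assertion_matches_atom[OF \<open>consistent T S2\<close> S2 f(2)] by blast
  have "\<alpha> = \<beta>"
    using assms(2)[unfolded interaction_free_def, rule_format, OF \<open>consistent T {f}\<close>, of \<alpha> \<beta> \<mu>\<alpha> \<mu>\<beta>] \<alpha> \<beta>
    by simp
  then have "avars \<alpha> \<subseteq> qvars q1 \<inter> qvars q2"
    using avars_subset_qvars[OF \<alpha>(1)] avars_subset_qvars[OF \<beta>(1)] by simp
  with assms(3) show False
    using avars_nonempty[of \<alpha>] by simp
qed

lemma min_supports_eq_minimal_subsets:
  "min_supports T q A = minimal_subsets A (\<lambda>S. entails T S q)"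
  by (simp add: min_supports_def minimal_subsets_def)

theorem lemma10:
  fixes T :: "('c,'r) axiom set"
    and q1 q2 :: "('c,'r,'v) atom set"
    and A :: "('c,'r,'i) assertion set"
  assumes "finite T"
    and "finite q1" and "finite q2"
    and "qvars q1 \<inter> qvars q2 = {}"
    and "interaction_free T (q1 \<union> q2) TYPE('i)"
    and "finite A"
    and "consistent T A"
  shows "num_ms T (q1 \<union> q2) A = num_ms T q1 A * num_ms T q2 A"
proof -
  have "S1 \<inter> S2 = {}"
    if "S1 \<in> minimal_subsets A (\<lambda>S. entails T S q1)" "S2 \<in> minimal_subsets A (\<lambda>S. entails T S q2)"
    for S1 S2
    using min_supports_disjoint[OF assms(7,5,4)] that by (simp add: min_supports_eq_minimal_subsets)
  from card_minimal_subsets_conj[OF this assms(6) entails_mono entails_mono]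
  show ?thesis
    using assms(4) by (simp add: num_ms_def min_supports_eq_minimal_subsets entails_union)
qed

end
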